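(* Let $A=A(u,v)$ be a $\mathbb{C}^k$-valued formal power series mapping, $u,v\in \mathbb{C}^k$, satisfying $\det A_u(u,v)\not\equiv 0$ and $A(0,v)\equiv 0$. Assume that $\mathrm{ord}_u\left(\det A_u(u,v)\right)\leq \nu$ for some nonnegative integer $\nu$. Then for every nonnegative integer $r$ and every formal power series $\psi (t,v)\in \mathbb{C}[[t,v]]$, $t\in \mathbb{C}^k$, if $\mathrm{ord}_u\left(\psi (A(u,v),v)\right) > r(\nu +1)$, then $\mathrm{ord}_t\, \psi (t,v)> r$.
   Context: For $S(x,x')\in\mathbb{C}[[x,x']]$, $\mathrm{ord}_x S$ denotes the order of $S$ viewed as a power series in $x$ with coefficients in $\mathbb{C}[[x']]$ (i.e. the smallest total degree in $x$ of a nonzero term; $+\infty$ if $S=0$). $A_u$ denotes the Jacobian matrix of $A$ with respect to $u$. *)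

theory Defs
  imports Complex_Main "HOL-Library.Extended_Nat" "HOL-Combinatorics.Permutations"
begin

text \<open>Formal power series in u = (u_i), v = (v_i), i ranging over a finite type 'n
  (so k = CARD('n)). f alpha beta is the coefficient of u^alpha v^beta.\<close>
type_synonym 'n fps2 = "('n \<Rightarrow> nat) \<Rightarrow> ('n \<Rightarrow> nat) \<Rightarrow> complex"

definition mdeg :: "('n::finite \<Rightarrow> nat) \<Rightarrow> nat" where
  "mdeg \<alpha> = (\<Sum>i\<in>UNIV. \<alpha> i)"

text \<open>Order in the first block of variables (u, resp. t); infinity for the zero series.\<close>
definition ord_u :: "'n::finite fps2 \<Rightarrow> enat" where
  "ord_u f = (INF \<alpha> \<in> {\<alpha>. \<exists>\<beta>. f \<alpha> \<beta> \<noteq> 0}. enat (mdeg \<alpha>))"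

text \<open>Coefficient of u^gamma v^eps in the product of the finitely many series F i, i in S.\<close>
definition prodcoeff :: "'i set \<Rightarrow> ('i \<Rightarrow> 'n::finite fps2) \<Rightarrow> 'n fps2" where
  "prodcoeff S F \<gamma> \<epsilon> =
     (\<Sum>m \<in> {m \<in> PiE S (\<lambda>_. {a. a \<le> \<gamma>} \<times> {b. b \<le> \<epsilon>}).
               (\<lambda>k. \<Sum>i\<in>S. fst (m i) k) = \<gamma> \<and> (\<lambda>k. \<Sum>i\<in>S. snd (m i) k) = \<epsilon>}.
        \<Prod>i\<in>S. F i (fst (m i)) (snd (m i)))"

definition du :: "'n::finite fps2 \<Rightarrow> 'n \<Rightarrow> 'n fps2" where
  "du f j \<alpha> \<beta> = of_nat (\<alpha> j + 1) * f (\<alpha>(j := \<alpha> j + 1)) \<beta>"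

text \<open>det A_u, where (A_u)_{ij} = dA_i/du_j (Leibniz formula).\<close>
definition jac_det :: "('n::finite \<Rightarrow> 'n fps2) \<Rightarrow> 'n fps2" where
  "jac_det A = (\<lambda>\<gamma> \<epsilon>. \<Sum>\<sigma>\<in>{\<sigma>. \<sigma> permutes (UNIV::'n set)}.
       of_int (sign \<sigma>) * prodcoeff UNIV (\<lambda>i. du (A i) (\<sigma> i)) \<gamma> \<epsilon>)"

text \<open>psi(A(u,v),v) for psi(t,v) = sum psi alpha beta t^alpha v^beta, where A(0,v) = 0.
  Since A^alpha has u-order at least |alpha|, only |alpha| <= |gamma| contributes to the
  coefficient of u^gamma v^eps, so the sum is finite.\<close>
definition subst :: "'n::finite fps2 \<Rightarrow> ('n \<Rightarrow> 'n fps2) \<Rightarrow> 'n fps2" where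
  "subst \<psi> A \<gamma> \<epsilon> =
     (\<Sum>(\<alpha>,\<beta>) \<in> {(\<alpha>,\<beta>). mdeg \<alpha> \<le> mdeg \<gamma> \<and> \<beta> \<le> \<epsilon>}.
        \<psi> \<alpha> \<beta> * prodcoeff {(i,j). j < \<alpha> i} (\<lambda>(i,j). A i) \<gamma> (\<lambda>k. \<epsilon> k - \<beta> k))"

end

theory Submission
  imports Defs "HOL-Library.Function_Algebras" "HOL-Library.Product_Plus" "HOL-Library.Product_Order"
    "HOL-Library.Fun_Lexorder" "HOL-Analysis.Determinants"
begin

text \<open>Induction on r. Write psi(A) for psi(A(u, v), v). By the chain rule
  d psi(A) / du_j = sum_i (d psi / dt_i)(A) * dA_i / du_j, so by Cramer's rule
  det A_u * (d psi / dt_k)(A) is the determinant of A_u with row k replaced by the u-derivatives of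
  psi(A). These have u-order > (r + 1)(nu + 1) - 1; as the u-order is additive on C[[u, v]] and
  ord_u det A_u <= nu, every (d psi / dt_k)(A) has u-order > r(nu + 1), so by induction every
  d psi / dt_k has t-order > r. Since moreover psi(0, v) = psi(A)(0, v) = 0, ord_t psi > r + 1.\<close>

section \<open>The ring C[[u, v]]\<close>

type_synonym 'n exps = "('n \<Rightarrow> nat) \<times> ('n \<Rightarrow> nat)"

lemma finite_le_fun: "finite {y::'n::finite \<Rightarrow> nat. y \<le> a}"
proof (rule finite_subset)
  show "{y::'n \<Rightarrow> nat. y \<le> a} \<subseteq> PiE UNIV (\<lambda>i. {..a i})"
    by (auto simp: le_fun_def PiE_def extensional_def)
qed (auto intro: finite_PiE)

lemma finite_exps_le: "finite {x::'n::finite exps. x \<le> e}"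
proof -
  have "{x::'n exps. x \<le> e} = {y. y \<le> fst e} \<times> {y. y \<le> snd e}"
    by (auto simp: less_eq_prod_def)
  then show ?thesis using finite_cartesian_product[OF finite_le_fun finite_le_fun] by metis
qed

lemma exps_add_diff: "(x::'n exps) \<le> e \<Longrightarrow> x + (e - x) = e"
  and exps_diff_diff: "(x::'n exps) \<le> e \<Longrightarrow> e - (e - x) = x"
  and exps_diff_swap: "(x::'n exps) \<le> s \<Longrightarrow> s \<le> e \<Longrightarrow> e - s = e - x - (s - x)"
  and exps_add_diff_cancel_left: "((x::'n exps) + z) - x = z"
  and exps_diff_diff_add: "(e::'n exps) - (x + z) = e - x - z"
  and exps_diff_zero: "(e::'n exps) - 0 = e"
  by (auto simp: less_eq_prod_def le_fun_def prod_eq_iff fun_eq_iff)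

lemma exps_diff_le: "(e::'n exps) - x \<le> e"
  and exps_le_add: "(x::'n exps) \<le> x + z"
  and exps_zero_le: "(0::'n exps) \<le> e"
  and exps_diff_mono: "(x::'n exps) \<le> s \<Longrightarrow> s \<le> e \<Longrightarrow> s - x \<le> e - x"
  by (auto simp: less_eq_prod_def le_fun_def intro: diff_le_mono)

lemma exps_add_le_iff: "(x::'n exps) \<le> e \<Longrightarrow> x + z \<le> e \<longleftrightarrow> z \<le> e - x"
  by (force simp: less_eq_prod_def le_fun_def le_diff_conv2 add.commute)

typedef 'n mfps = "UNIV :: ('n exps \<Rightarrow> complex) set"
  morphisms coef Abs_mfps by auto

lemma mfps_eqI: "(\<And>x. coef f x = coef g x) \<Longrightarrow> f = g"
  by (metis coef_inject ext)

lemma coef_Abs_mfps [simp]: "coef (Abs_mfps h) = h"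
  by (simp add: Abs_mfps_inverse)

instantiation mfps :: (finite) comm_ring_1
begin

definition "0 = Abs_mfps (\<lambda>_. 0)"
definition "1 = Abs_mfps (\<lambda>x. if x = 0 then 1 else 0)"
definition "f + g = Abs_mfps (\<lambda>x. coef f x + coef g x)"
definition "f - g = Abs_mfps (\<lambda>x. coef f x - coef g x)"
definition "- f = Abs_mfps (\<lambda>x. - coef f x)"
definition "f * g = Abs_mfps (\<lambda>e. \<Sum>x\<in>{x. x \<le> e}. coef f x * coef g (e - x))"

lemma coef_0 [simp]: "coef 0 x = 0" by (simp add: zero_mfps_def)
lemma coef_1: "coef 1 x = (if x = 0 then 1 else 0)" by (simp add: one_mfps_def)
lemma coef_add [simp]: "coef (f + g) x = coef f x + coef g x" by (simp add: plus_mfps_def)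
lemma coef_diff [simp]: "coef (f - g) x = coef f x - coef g x" by (simp add: minus_mfps_def)
lemma coef_uminus [simp]: "coef (- f) x = - coef f x" by (simp add: uminus_mfps_def)
lemma coef_mult: "coef (f * g) e = (\<Sum>x\<in>{x. x \<le> e}. coef f x * coef g (e - x))"
  by (simp add: times_mfps_def)

lemma coef_mult_commute: "coef ((f::'a mfps) * g) e = coef (g * f) e"
proof -
  have "coef (f * g) e = (\<Sum>x\<in>{x. x \<le> e}. coef f (e - x) * coef g (e - (e - x)))"
    unfolding coef_mult
    by (rule sum.reindex_bij_witness[where i="\<lambda>x. e - x" and j="\<lambda>x. e - x"])
       (auto simp: exps_diff_diff exps_diff_le)
  also have "\<dots> = coef (g * f) e"
    unfolding coef_mult by (rule sum.cong) (auto simp: exps_diff_diff mult.commute)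
  finally show ?thesis .
qed

lemma coef_mult_assoc: "coef ((f::'a mfps) * g * h) e = coef (f * (g * h)) e"
proof -
  have "coef (f * g * h) e =
      (\<Sum>s\<in>{s. s \<le> e}. \<Sum>x\<in>{x. x \<le> e \<and> x \<le> s}. coef f x * coef g (s - x) * coef h (e - s))"
    by (auto simp: coef_mult sum_distrib_right intro!: sum.cong dest: order_trans)
  also have "\<dots> = (\<Sum>x\<in>{x. x \<le> e}. \<Sum>s\<in>{s. s \<le> e \<and> x \<le> s}. coef f x * coef g (s - x) * coef h (e - s))"
    using sum.swap_restrict[of "{s. s \<le> e}" "{x. x \<le> e}" _ "\<lambda>s x. x \<le> s"]
    by (simp add: finite_exps_le)
  also have "\<dots> = (\<Sum>x\<in>{x. x \<le> e}. \<Sum>z\<in>{z. z \<le> e - x}. coef f x * coef g z * coef h (e - x - z))"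
  proof (rule sum.cong[OF refl])
    fix x assume "x \<in> {x. x \<le> e}"
    then show "(\<Sum>s\<in>{s. s \<le> e \<and> x \<le> s}. coef f x * coef g (s - x) * coef h (e - s)) =
          (\<Sum>z\<in>{z. z \<le> e - x}. coef f x * coef g z * coef h (e - x - z))"
      by (intro sum.reindex_bij_witness[where i="\<lambda>z. x + z" and j="\<lambda>s. s - x"])
         (auto simp: exps_add_diff_cancel_left exps_diff_diff_add exps_le_add exps_add_le_iff
           exps_diff_mono exps_diff_swap[symmetric] exps_add_diff)
  qed
  also have "\<dots> = coef (f * (g * h)) e"
    by (simp add: coef_mult sum_distrib_left mult.assoc)
  finally show ?thesis .
qed

instance
proof
  fix a b c :: "'a mfps"
  show "a * b * c = a * (b * c)" by (rule mfps_eqI, rule coef_mult_assoc)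
  show "a * b = b * a" by (rule mfps_eqI, rule coef_mult_commute)
  show "1 * a = a"
  proof (rule mfps_eqI)
    fix e
    have "coef (1 * a) e = (\<Sum>x\<in>{x. x \<le> e}. if x = 0 then coef a e else 0)"
      by (auto simp: coef_mult coef_1 exps_diff_zero intro!: sum.cong)
    then show "coef (1 * a) e = coef a e" by (simp add: finite_exps_le exps_zero_le)
  qed
  show "(a + b) * c = a * c + b * c"
    by (rule mfps_eqI) (simp add: coef_mult distrib_right sum.distrib)
  show "(0::'a mfps) \<noteq> 1"
    by (metis coef_0 coef_1 zero_neq_one)
qed (auto intro: mfps_eqI)

end

lemma coef_sum: "coef (\<Sum>i\<in>S. F i) x = (\<Sum>i\<in>S. coef (F i) x)"
  by (induction S rule: infinite_finite_induct) auto

lemma coef_of_nat_mult: "coef (of_nat n * f) x = of_nat n * coef f x"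
  by (induction n) (auto simp: distrib_right)

lemma coef_of_int_mult: "coef (of_int n * f) x = of_int n * coef f x"
  by (cases n rule: int_cases2) (auto simp: coef_of_nat_mult)

section \<open>The u-order\<close>

lemma mdeg_add: "mdeg ((a::'n::finite \<Rightarrow> nat) + b) = mdeg a + mdeg b"
  by (simp add: mdeg_def sum.distrib)

lemma mdeg_diff: "(x::'n::finite \<Rightarrow> nat) \<le> a \<Longrightarrow> mdeg x + mdeg (a - x) = mdeg a"
  unfolding mdeg_add[symmetric] by (rule arg_cong[where f=mdeg]) (auto simp: le_fun_def fun_eq_iff)

lemma mdeg_eq_0_iff: "mdeg (a::'n::finite \<Rightarrow> nat) = 0 \<longleftrightarrow> a = 0"
  by (auto simp: mdeg_def fun_eq_iff)

lemma mdeg_fun_upd: "mdeg (a(i := x)) + a i = mdeg (a::'n::finite \<Rightarrow> nat) + x"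
proof -
  have "mdeg (a(i := y)) = y + (\<Sum>k\<in>UNIV - {i}. a k)" for y
    unfolding mdeg_def by (subst sum.remove[of _ i]) (auto intro!: sum.cong)
  from this[of x] this[of "a i"] show ?thesis by simp
qed

lemma le_mdeg: "(a::'n::finite \<Rightarrow> nat) i \<le> mdeg a"
  unfolding mdeg_def by (rule member_le_sum) auto

lemma finite_mdeg_le: "finite {a::'n::finite \<Rightarrow> nat. mdeg a \<le> N}"
  by (rule finite_subset[OF _ finite_le_fun[of "\<lambda>_. N"]])
     (auto simp: le_fun_def intro: order_trans[OF le_mdeg])

lemma enat_le_ord_u_iff: "enat m \<le> ord_u f \<longleftrightarrow> (\<forall>\<alpha> \<beta>. mdeg \<alpha> < m \<longrightarrow> f \<alpha> \<beta> = 0)"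
  unfolding ord_u_def le_INF_iff by (force simp: not_less)

lemma ord_u_le: "f \<alpha> \<beta> \<noteq> 0 \<Longrightarrow> ord_u f \<le> enat (mdeg \<alpha>)"
  unfolding ord_u_def by (rule INF_lower) auto

definition u_order :: "'n::finite mfps \<Rightarrow> enat" where
  "u_order f = ord_u (\<lambda>a b. coef f (a, b))"

lemma enat_le_u_order_iff: "enat m \<le> u_order f \<longleftrightarrow> (\<forall>a b. mdeg a < m \<longrightarrow> coef f (a, b) = 0)"
  by (simp add: u_order_def enat_le_ord_u_iff)

lemma u_order_le: "coef f x \<noteq> 0 \<Longrightarrow> u_order f \<le> enat (mdeg (fst x))"
  unfolding u_order_def by (rule ord_u_le[where \<beta>="snd x"]) simp

lemma u_order_0 [simp]: "u_order 0 = \<infinity>"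
  by (simp add: u_order_def ord_u_def top_enat_def)

lemma u_order_add_ge: "enat m \<le> u_order f \<Longrightarrow> enat m \<le> u_order g \<Longrightarrow> enat m \<le> u_order (f + g)"
  by (simp add: enat_le_u_order_iff)

lemma u_order_sum_ge: "(\<And>i. i \<in> S \<Longrightarrow> enat m \<le> u_order (F i)) \<Longrightarrow> enat m \<le> u_order (\<Sum>i\<in>S. F i)"
  by (induction S rule: infinite_finite_induct) (auto simp: zero_enat_def[symmetric] intro: u_order_add_ge)

lemma u_order_mult_ge:
  assumes f: "enat m \<le> u_order f" and g: "enat n \<le> u_order g"
  shows "enat (m + n) \<le> u_order (f * g)"
  unfolding enat_le_u_order_iff
proof (intro allI impI)
  fix a b :: "'a \<Rightarrow> nat" assume deg: "mdeg a < m + n"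
  show "coef (f * g) (a, b) = 0"
    unfolding coef_mult
  proof (rule sum.neutral, intro ballI)
    fix x assume "x \<in> {x. x \<le> (a, b)}"
    then have "mdeg (fst x) + mdeg (a - fst x) = mdeg a"
      by (intro mdeg_diff) (auto simp: less_eq_prod_def)
    then have "mdeg (fst x) < m \<or> mdeg (a - fst x) < n" using deg by linarith
    then show "coef f x * coef g ((a, b) - x) = 0"
      using f g by (cases x) (auto simp: enat_le_u_order_iff)
  qed
qed

section \<open>A graded monomial order\<close>

definition var_rank :: "'a::finite \<Rightarrow> nat" where
  "var_rank = (SOME r. inj r)"

lemma inj_var_rank: "inj (var_rank :: 'a::finite \<Rightarrow> nat)"
proof -
  have "\<exists>r :: 'a \<Rightarrow> nat. inj r"
    using finite_imp_inj_to_nat_seg[of "UNIV :: 'a set"] by auto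
  then show ?thesis unfolding var_rank_def by (rule someI_ex)
qed

text \<open>The graded lexicographic monomial order: exponents are compared by their u-degree, then by
  their v-degree, then lexicographically in the variable order var_rank. Grading by the u-degree
  first makes the least exponent of a series realise its u-order.\<close>

definition mono_code :: "'n::finite exps \<Rightarrow> nat \<Rightarrow> nat" where
  "mono_code x k =
     (if k = 0 then mdeg (fst x) else if k = 1 then mdeg (snd x)
      else (\<Sum>i\<in>{i. var_rank i = k - 2}. case_sum (fst x) (snd x) i))"

definition mono_less :: "'n::finite exps \<Rightarrow> 'n exps \<Rightarrow> bool" where
  "mono_less x y \<longleftrightarrow> less_fun (mono_code x) (mono_code y)"

lemma mono_code_add: "mono_code (x + y) = mono_code x + mono_code y"
  by (auto simp: fun_eq_iff mono_code_def mdeg_add sum.distrib[symmetric] split: sum.split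
      intro!: sum.cong)

lemma mono_code_var_rank: "mono_code x (var_rank i + 2) = case_sum (fst x) (snd x) i"
proof -
  have "{j. var_rank j = var_rank i} = {i}"
    using inj_var_rank by (auto dest: injD)
  then show ?thesis by (simp add: mono_code_def)
qed

lemma inj_mono_code: "inj (mono_code :: 'n::finite exps \<Rightarrow> _)"
proof (rule injI)
  fix x y :: "'n exps"
  assume "mono_code x = mono_code y"
  then have "case_sum (fst x) (snd x) i = case_sum (fst y) (snd y) i" for i
    by (metis mono_code_var_rank)
  from this[of "Inl _"] this[of "Inr _"] show "x = y"
    by (simp add: prod_eq_iff fun_eq_iff)
qed

lemma mono_less_irrefl: "\<not> mono_less x x"
  by (simp add: mono_less_def less_fun_irrefl)

lemma mono_less_trans: "mono_less x y \<Longrightarrow> mono_less y z \<Longrightarrow> mono_less x z"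
  unfolding mono_less_def by (rule less_fun_trans)

lemma mono_less_linear:
  fixes x y :: "'n::finite exps"
  assumes "x \<noteq> y"
  shows "mono_less x y \<or> mono_less y x"
proof -
  define R where "R = range (\<lambda>i :: 'n + 'n. var_rank i + 2)"
  have "mono_code x k = mono_code y k" if k: "k \<notin> {0, 1} \<union> R" for k
  proof -
    have "var_rank i \<noteq> k - 2" for i :: "'n + 'n"
    proof
      assume "var_rank i = k - 2"
      with k have "k = var_rank i + 2" by auto
      then have "k \<in> R" by (simp add: R_def)
      with k show False by blast
    qed
    then have "{i :: 'n + 'n. var_rank i = k - 2} = {}" by blast
    moreover have "k \<noteq> 0" "k \<noteq> 1" using k by auto
    ultimately show ?thesis unfolding mono_code_def by simp
  qed
  then have "{k. mono_code x k \<noteq> mono_code y k} \<subseteq> {0, 1} \<union> R"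
    by blast
  then have "finite {k. mono_code x k \<noteq> mono_code y k}"
    by (rule finite_subset) (simp add: R_def)
  moreover have "mono_code x \<noteq> mono_code y"
    using inj_mono_code assms by (auto dest: injD)
  ultimately show ?thesis
    unfolding mono_less_def using less_fun_trichotomy by blast
qed

lemma mono_less_add_right: "mono_less x y \<Longrightarrow> mono_less (x + z) (y + z)"
  unfolding mono_less_def mono_code_add
  by (erule less_funE, rule less_funI) auto

lemma mono_less_imp_mdeg_le: "mono_less x y \<Longrightarrow> mdeg (fst x) \<le> mdeg (fst y)"
proof -
  assume "mono_less x y"
  then obtain k where k: "mono_code x k < mono_code y k"
    and below: "\<And>k'. k' < k \<Longrightarrow> mono_code x k' = mono_code y k'"
    unfolding mono_less_def Fun_Lexorder.less_fun_def by blast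
  have "mono_code x 0 \<le> mono_code y 0"
  proof (cases "k = 0")
    case True
    then show ?thesis using k by simp
  next
    case False
    then show ?thesis using below[of 0] by simp
  qed
  then show ?thesis by (simp add: mono_code_def)
qed

lemma finite_has_mono_least:
  "finite S \<Longrightarrow> S \<noteq> {} \<Longrightarrow> \<exists>m\<in>S. \<forall>x\<in>S. x \<noteq> m \<longrightarrow> mono_less m x"
proof (induction S rule: finite_ne_induct)
  case (insert x S)
  then obtain m where m: "m \<in> S" "\<forall>y\<in>S. y \<noteq> m \<longrightarrow> mono_less m y" by blast
  show ?case
  proof (cases "mono_less x m")
    case True
    then show ?thesis using m insert.hyps by (intro bexI[of _ x]) (auto intro: mono_less_trans)
  next
    case False
    then have "mono_less m x" using mono_less_linear m insert.hyps by metis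
    then show ?thesis using m by (intro bexI[of _ m]) auto
  qed
qed simp

text \<open>Minimising the u-degree and then the v-degree leaves a finite set of candidates.\<close>

lemma has_mono_least:
  assumes "(S :: 'n::finite exps set) \<noteq> {}"
  shows "\<exists>m\<in>S. \<forall>x\<in>S. x \<noteq> m \<longrightarrow> mono_less m x"
proof -
  define d1 where "d1 = (LEAST d. \<exists>x\<in>S. mdeg (fst x) = d)"
  have "\<exists>x\<in>S. mdeg (fst x) = d1"
    unfolding d1_def using assms by (auto intro: LeastI)
  then obtain x1 where x1: "x1 \<in> S" "mdeg (fst x1) = d1" by blast
  have d1_le: "d1 \<le> mdeg (fst x)" if "x \<in> S" for x
    unfolding d1_def using that by (auto intro: Least_le)
  define T where "T = {x\<in>S. mdeg (fst x) = d1 \<and> mdeg (snd x) \<le> mdeg (snd x1)}"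
  have "T \<subseteq> {x. x \<le> ((\<lambda>_. d1), (\<lambda>_. mdeg (snd x1)))}"
    unfolding T_def by (auto simp: less_eq_prod_def le_fun_def intro: order_trans[OF le_mdeg])
  then have "finite T" using finite_exps_le finite_subset by blast
  moreover have "x1 \<in> T" using x1 by (simp add: T_def)
  ultimately obtain m where m: "m \<in> T" "\<forall>x\<in>T. x \<noteq> m \<longrightarrow> mono_less m x"
    using finite_has_mono_least by blast
  have "mono_less m x" if x: "x \<in> S" "x \<noteq> m" for x
  proof (cases "x \<in> T")
    case True
    then show ?thesis using m x by blast
  next
    case False
    then have "mdeg (fst m) < mdeg (fst x) \<or>
        mdeg (fst m) = mdeg (fst x) \<and> mdeg (snd m) < mdeg (snd x)"
      using m(1) x(1) d1_le[OF x(1)] by (auto simp: T_def)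
    then show ?thesis
      by (auto simp: mono_less_def Fun_Lexorder.less_fun_def mono_code_def intro: exI[of _ 0] exI[of _ 1])
  qed
  moreover have "m \<in> S" using m(1) by (simp add: T_def)
  ultimately show ?thesis by blast
qed

definition leading_exp :: "'n::finite mfps \<Rightarrow> 'n exps \<Rightarrow> bool" where
  "leading_exp f x0 \<longleftrightarrow> coef f x0 \<noteq> 0 \<and> (\<forall>x. coef f x \<noteq> 0 \<longrightarrow> x \<noteq> x0 \<longrightarrow> mono_less x0 x)"

lemma leading_exp_exists: "f \<noteq> 0 \<Longrightarrow> \<exists>x0. leading_exp f x0"
proof -
  assume "f \<noteq> 0"
  then obtain x where "coef f x \<noteq> 0" using mfps_eqI[of f 0] by auto
  then have "{x. coef f x \<noteq> 0} \<noteq> {}" by blast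
  from has_mono_least[OF this] obtain x0
    where "x0 \<in> {x. coef f x \<noteq> 0}" "\<forall>x\<in>{x. coef f x \<noteq> 0}. x \<noteq> x0 \<longrightarrow> mono_less x0 x" ..
  then have "leading_exp f x0" by (simp add: leading_exp_def)
  then show ?thesis ..
qed

lemma u_order_leading_exp: "leading_exp f x0 \<Longrightarrow> u_order f = enat (mdeg (fst x0))"
proof (rule antisym)
  assume x0: "leading_exp f x0"
  then show "u_order f \<le> enat (mdeg (fst x0))"
    by (intro u_order_le) (simp add: leading_exp_def)
  have "mdeg (fst x0) \<le> mdeg a" if "coef f (a, b) \<noteq> 0" for a b
  proof (cases "(a, b) = x0")
    case False
    then have "mono_less x0 (a, b)" using x0 that unfolding leading_exp_def by blast
    then show ?thesis using mono_less_imp_mdeg_le by fastforce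
  qed auto
  then show "enat (mdeg (fst x0)) \<le> u_order f"
    unfolding enat_le_u_order_iff by (meson not_le)
qed

lemma coef_mult_leading_exp:
  assumes x0: "leading_exp f x0" and y0: "leading_exp g y0"
  shows "coef (f * g) (x0 + y0) = coef f x0 * coef g y0"
proof -
  let ?s = "x0 + y0"
  have "coef (f * g) ?s =
      coef f x0 * coef g (?s - x0) + (\<Sum>x\<in>{x. x \<le> ?s} - {x0}. coef f x * coef g (?s - x))"
    unfolding coef_mult by (subst sum.remove[of _ x0]) (auto simp: finite_exps_le exps_le_add)
  also have "(\<Sum>x\<in>{x. x \<le> ?s} - {x0}. coef f x * coef g (?s - x)) = 0"
  proof (rule sum.neutral, intro ballI)
    fix x assume x: "x \<in> {x. x \<le> ?s} - {x0}"
    let ?y = "?s - x"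
    have sum_eq: "x + ?y = ?s" using x by (simp add: exps_add_diff)
    show "coef f x * coef g ?y = 0"
    proof (rule ccontr)
      assume "coef f x * coef g ?y \<noteq> 0"
      then have "coef f x \<noteq> 0" "coef g ?y \<noteq> 0" by auto
      then have x0x: "mono_less x0 x" and y: "?y = y0 \<or> mono_less y0 ?y"
        using x x0 y0 unfolding leading_exp_def by blast+
      from x0x have "mono_less ?s (x + y0)" by (rule mono_less_add_right)
      moreover have "mono_less (x + y0) (x + ?y)" if "mono_less y0 ?y"
        using mono_less_add_right[OF that, of x] by (simp add: add.commute)
      ultimately have "mono_less ?s ?s"
        using y sum_eq mono_less_trans by metis
      then show False by (simp add: mono_less_irrefl)
    qed
  qed
  finally show ?thesis by (simp add: exps_add_diff_cancel_left add.commute[of x0 y0])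
qed

text \<open>Leading exponents add under multiplication.\<close>

lemma u_order_mult: "u_order (f * g) = u_order f + u_order g"
proof (cases "f = 0 \<or> g = 0")
  case False
  then obtain x0 y0 where x0: "leading_exp f x0" and y0: "leading_exp g y0"
    using leading_exp_exists by blast
  have ord: "u_order f + u_order g = enat (mdeg (fst x0) + mdeg (fst y0))"
    by (simp add: u_order_leading_exp[OF x0] u_order_leading_exp[OF y0])
  have "coef (f * g) (x0 + y0) \<noteq> 0"
    using x0 y0 by (simp add: coef_mult_leading_exp leading_exp_def)
  then have "u_order (f * g) \<le> enat (mdeg (fst (x0 + y0)))" by (rule u_order_le)
  then have "u_order (f * g) \<le> u_order f + u_order g" by (simp add: ord mdeg_add)
  moreover have "u_order f + u_order g \<le> u_order (f * g)"
    unfolding ord using x0 y0 by (intro u_order_mult_ge) (simp_all add: u_order_leading_exp)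
  ultimately show ?thesis by (rule antisym)
qed auto

lemma u_order_prod_ge:
  "finite S \<Longrightarrow> (\<And>i. i \<in> S \<Longrightarrow> enat (m i) \<le> u_order (F i)) \<Longrightarrow>
    enat (\<Sum>i\<in>S. m i) \<le> u_order (\<Prod>i\<in>S. F i)"
  by (induction S rule: finite_induct) (auto simp: zero_enat_def[symmetric] intro: u_order_mult_ge)

lemma u_order_power_ge: "enat m \<le> u_order f \<Longrightarrow> enat (k * m) \<le> u_order (f ^ k)"
  by (induction k) (auto simp: zero_enat_def[symmetric] intro: u_order_mult_ge)

section \<open>Partial derivatives in u\<close>

definition unit_u :: "'n \<Rightarrow> 'n exps" where
  "unit_u j = ((\<lambda>i. if i = j then 1 else 0), 0)"

lemma mdeg_unit_u: "mdeg (fst (unit_u j :: 'n::finite exps)) = 1"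
  by (simp add: unit_u_def mdeg_def)

lemma add_unit_u_neq_0: "x + unit_u j \<noteq> 0"
proof
  assume "x + unit_u j = 0"
  then have "fst (x + unit_u j) j = 0" by simp
  then show False by (simp add: unit_u_def)
qed

definition mfps_deriv :: "'n \<Rightarrow> 'n::finite mfps \<Rightarrow> 'n mfps" where
  "mfps_deriv j f = Abs_mfps (\<lambda>(a, b). of_nat (a j + 1) * coef f (a(j := a j + 1), b))"

lemma coef_mfps_deriv: "coef (mfps_deriv j f) e = of_nat (fst e j + 1) * coef f (e + unit_u j)"
proof -
  have "(fst e)(j := fst e j + 1) = fst e + fst (unit_u j)"
    by (auto simp: unit_u_def fun_eq_iff)
  then show ?thesis by (cases e) (simp add: mfps_deriv_def unit_u_def)
qed

lemma u_order_mfps_deriv_ge: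
  fixes f :: "'n::finite mfps"
  shows "enat (Suc m) \<le> u_order f \<Longrightarrow> enat m \<le> u_order (mfps_deriv j f)"
proof (unfold enat_le_u_order_iff, intro allI impI)
  fix a b :: "'n \<Rightarrow> nat" assume f: "\<forall>a b. mdeg a < Suc m \<longrightarrow> coef f (a, b) = 0" and a: "mdeg a < m"
  have "(a, b) + unit_u j = (a + fst (unit_u j), b)" by (simp add: unit_u_def)
  moreover have "mdeg (a + fst (unit_u j)) < Suc m"
    using a by (simp add: mdeg_add mdeg_unit_u)
  ultimately show "coef (mfps_deriv j f) (a, b) = 0"
    using f by (simp add: coef_mfps_deriv)
qed

lemma mfps_deriv_0 [simp]: "mfps_deriv j 0 = 0"
  and mfps_deriv_1 [simp]: "mfps_deriv j 1 = 0"
  by (auto intro!: mfps_eqI simp: coef_mfps_deriv coef_1 add_unit_u_neq_0)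

lemma mfps_deriv_add: "mfps_deriv j (f + g) = mfps_deriv j f + mfps_deriv j g"
  by (rule mfps_eqI) (simp add: coef_mfps_deriv distrib_left)

lemma mfps_deriv_sum: "mfps_deriv j (\<Sum>i\<in>S. F i) = (\<Sum>i\<in>S. mfps_deriv j (F i))"
  by (induction S rule: infinite_finite_induct) (auto simp: mfps_deriv_add)

lemma coef_mfps_deriv_mult_left:
  "coef (mfps_deriv j f * g) e =
    (\<Sum>y\<in>{y. y \<le> e + unit_u j}. of_nat (fst y j) * (coef f y * coef g (e + unit_u j - y)))"
proof -
  let ?E = "e + unit_u j"
  have "coef (mfps_deriv j f * g) e =
      (\<Sum>x\<in>{x. x \<le> e}. of_nat (fst (x + unit_u j) j) * (coef f (x + unit_u j) * coef g (?E - (x + unit_u j))))"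
    unfolding coef_mult coef_mfps_deriv
    by (rule sum.cong) (auto simp: unit_u_def prod_eq_iff fun_eq_iff)
  also have "\<dots> = (\<Sum>y\<in>{y. y \<le> ?E \<and> fst y j \<ge> 1}. of_nat (fst y j) * (coef f y * coef g (?E - y)))"
    by (rule sum.reindex_bij_witness[where i="\<lambda>y. y - unit_u j" and j="\<lambda>x. x + unit_u j"])
       (auto simp: unit_u_def prod_eq_iff fun_eq_iff less_eq_prod_def le_fun_def split: if_splits)
  also have "\<dots> = (\<Sum>y\<in>{y. y \<le> ?E}. of_nat (fst y j) * (coef f y * coef g (?E - y)))"
    by (rule sum.mono_neutral_left) (auto simp: finite_exps_le)
  finally show ?thesis .
qed

lemma coef_mult_mfps_deriv_right:
  "coef (f * mfps_deriv j g) e =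
    (\<Sum>y\<in>{y. y \<le> e + unit_u j}. of_nat (fst (e + unit_u j - y) j) * (coef f y * coef g (e + unit_u j - y)))"
proof -
  let ?E = "e + unit_u j"
  have "coef (f * mfps_deriv j g) e =
      (\<Sum>y\<in>{y. y \<le> e}. of_nat (fst (?E - y) j) * (coef f y * coef g (?E - y)))"
    unfolding coef_mult coef_mfps_deriv
  proof (rule sum.cong[OF refl])
    fix y assume "y \<in> {y. y \<le> e}"
    then have "e - y + unit_u j = ?E - y" and "fst (e - y) j + 1 = fst (?E - y) j"
      by (auto simp: unit_u_def less_eq_prod_def le_fun_def prod_eq_iff fun_eq_iff Suc_diff_le)
    then show "coef f y * (of_nat (fst (e - y) j + 1) * coef g (e - y + unit_u j)) =
        of_nat (fst (?E - y) j) * (coef f y * coef g (?E - y))"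
      by simp
  qed
  also have "\<dots> = (\<Sum>y\<in>{y. y \<le> ?E}. of_nat (fst (?E - y) j) * (coef f y * coef g (?E - y)))"
  proof (rule sum.mono_neutral_left)
    show "{y. y \<le> e} \<subseteq> {y. y \<le> ?E}"
      by (auto simp: unit_u_def less_eq_prod_def le_fun_def intro: le_SucI)
    show "\<forall>y\<in>{y. y \<le> ?E} - {y. y \<le> e}. of_nat (fst (?E - y) j) * (coef f y * coef g (?E - y)) = 0"
    proof
      fix y assume y: "y \<in> {y. y \<le> ?E} - {y. y \<le> e}"
      then have le: "\<forall>i. fst y i \<le> fst e i + (if i = j then 1 else 0)" and "snd y \<le> snd e"
        by (auto simp: unit_u_def less_eq_prod_def le_fun_def)
      then obtain i where i: "\<not> fst y i \<le> fst e i"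
        using y by (auto simp: less_eq_prod_def le_fun_def)
      then have "i = j" using le[rule_format, of i] by (cases "i = j") auto
      then have "fst y j = fst e j + 1" using i le[rule_format, of j] by simp
      then show "of_nat (fst (?E - y) j) * (coef f y * coef g (?E - y)) = 0"
        by (simp add: unit_u_def)
    qed
  qed (rule finite_exps_le)
  finally show ?thesis .
qed

lemma mfps_deriv_mult: "mfps_deriv j (f * g) = mfps_deriv j f * g + f * mfps_deriv j g"
proof (rule mfps_eqI)
  fix e :: "'a exps"
  let ?E = "e + unit_u j"
  have "fst y j + fst (?E - y) j = fst e j + 1" if "y \<le> ?E" for y
    using that by (auto simp: unit_u_def less_eq_prod_def le_fun_def dest: spec[of _ j])
  then have "coef (mfps_deriv j (f * g)) e =
      (\<Sum>y\<in>{y. y \<le> ?E}. (of_nat (fst y j) + of_nat (fst (?E - y) j)) * (coef f y * coef g (?E - y)))"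
    by (auto simp: coef_mfps_deriv coef_mult sum_distrib_left intro!: sum.cong
        simp flip: of_nat_add)
  then show "coef (mfps_deriv j (f * g)) e = coef (mfps_deriv j f * g + f * mfps_deriv j g) e"
    by (simp add: coef_mfps_deriv_mult_left coef_mult_mfps_deriv_right distrib_right sum.distrib)
qed

lemma mfps_deriv_prod:
  "finite S \<Longrightarrow> mfps_deriv j (\<Prod>i\<in>S. F i) = (\<Sum>i\<in>S. mfps_deriv j (F i) * (\<Prod>k\<in>S - {i}. F k))"
proof (induction S rule: finite_induct)
  case (insert x S)
  have "insert x S - {i} = insert x (S - {i})" if "i \<in> S" for i
    using insert that by auto
  with insert show ?case
    by (simp add: mfps_deriv_mult sum_distrib_left mult_ac insert_Diff_if)
qed simp

lemma mfps_deriv_power: "mfps_deriv j (f ^ n) = of_nat n * f ^ (n - 1) * mfps_deriv j f"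
proof (induction n)
  case (Suc n)
  then show ?case by (cases n) (simp_all add: mfps_deriv_mult algebra_simps)
qed simp

section \<open>Truncated composition and the chain rule\<close>

definition const_v :: "(('n::finite \<Rightarrow> nat) \<Rightarrow> complex) \<Rightarrow> 'n mfps" where
  "const_v h = Abs_mfps (\<lambda>(a, b). if a = 0 then h b else 0)"

lemma coef_const_v: "coef (const_v h) x = (if fst x = 0 then h (snd x) else 0)"
  by (cases x) (simp add: const_v_def)

lemma mfps_deriv_const_v [simp]: "mfps_deriv j (const_v h) = 0"
proof (rule mfps_eqI)
  fix x :: "'a exps"
  have "fst (x + unit_u j) \<noteq> 0"
    using add_unit_u_neq_0[of "(fst x, 0)" j] by (auto simp: unit_u_def prod_eq_iff)
  then show "coef (mfps_deriv j (const_v h)) x = coef 0 x"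
    by (simp only: coef_mfps_deriv coef_const_v if_False mult_zero_right coef_0)
qed

lemma const_v_of_nat_mult: "const_v (\<lambda>b. of_nat n * h b) = of_nat n * const_v h"
  by (rule mfps_eqI) (simp add: coef_of_nat_mult coef_const_v)

lemma coef_const_v_mult:
  "coef (const_v h * g) (a, b) = (\<Sum>b'\<in>{b'. b' \<le> b}. h b' * coef g (a, b - b'))"
proof -
  have "coef (const_v h * g) (a, b) =
      (\<Sum>x\<in>(\<lambda>b'. (0, b')) ` {b'. b' \<le> b}. coef (const_v h) x * coef g ((a, b) - x))"
    unfolding coef_mult
    by (rule sum.mono_neutral_right[OF finite_exps_le])
       (auto simp: less_eq_prod_def le_fun_def coef_const_v zero_fun_def)
  also have "\<dots> = (\<Sum>b'\<in>{b'. b' \<le> b}. h b' * coef g (a, b - b'))"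
    by (subst sum.reindex) (auto simp: inj_on_def coef_const_v)
  finally show ?thesis .
qed

definition mpow :: "('n \<Rightarrow> 'n::finite mfps) \<Rightarrow> ('n \<Rightarrow> nat) \<Rightarrow> 'n mfps" where
  "mpow A \<alpha> = (\<Prod>i\<in>UNIV. A i ^ \<alpha> i)"

lemma mpow_0 [simp]: "mpow A 0 = 1"
  by (simp add: mpow_def)

lemma mpow_fun_upd: "mpow A (\<alpha>(i := x)) = A i ^ x * (\<Prod>k\<in>UNIV - {i}. A k ^ \<alpha> k)"
  unfolding mpow_def by (subst prod.remove[of _ i]) (auto intro!: prod.cong)

lemma mfps_deriv_mpow:
  "mfps_deriv j (mpow A \<alpha>) = (\<Sum>i\<in>UNIV. of_nat (\<alpha> i) * mpow A (\<alpha>(i := \<alpha> i - 1)) * mfps_deriv j (A i))"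
proof -
  have "mfps_deriv j (mpow A \<alpha>) = (\<Sum>i\<in>UNIV. mfps_deriv j (A i ^ \<alpha> i) * (\<Prod>k\<in>UNIV - {i}. A k ^ \<alpha> k))"
    unfolding mpow_def by (simp add: mfps_deriv_prod)
  also have "\<dots> = (\<Sum>i\<in>UNIV. of_nat (\<alpha> i) * mpow A (\<alpha>(i := \<alpha> i - 1)) * mfps_deriv j (A i))"
    by (simp add: mpow_fun_upd mfps_deriv_power mult_ac)
  finally show ?thesis .
qed

lemma u_order_mpow_ge:
  assumes "\<And>i. 1 \<le> u_order (A i)"
  shows "enat (mdeg \<alpha>) \<le> u_order (mpow A \<alpha>)"
proof -
  have "enat (\<alpha> i * 1) \<le> u_order (A i ^ \<alpha> i)" for i
    using assms by (intro u_order_power_ge) (simp add: one_enat_def)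
  then show ?thesis
    unfolding mpow_def mdeg_def by (intro u_order_prod_ge) simp_all
qed

text \<open>The composition psi(A(u, v), v), with psi truncated at t-degree N; when A(0, v) = 0 this
  agrees with the full composition up to u-degree N.\<close>

definition comp_trunc :: "'n fps2 \<Rightarrow> ('n \<Rightarrow> 'n::finite mfps) \<Rightarrow> nat \<Rightarrow> 'n mfps" where
  "comp_trunc \<psi> A N = (\<Sum>\<alpha>\<in>{\<alpha>. mdeg \<alpha> \<le> N}. const_v (\<psi> \<alpha>) * mpow A \<alpha>)"

lemma sum_mdeg_le_Suc_shift:
  "(\<Sum>\<alpha>\<in>{\<alpha>. mdeg \<alpha> \<le> Suc N}. of_nat (\<alpha> i) * F \<alpha> (\<alpha>(i := \<alpha> i - 1))) =
    (\<Sum>\<alpha>\<in>{\<alpha>. mdeg \<alpha> \<le> N}. of_nat (\<alpha> i + 1) * F (\<alpha>(i := \<alpha> i + 1)) (\<alpha> :: 'n::finite \<Rightarrow> nat))"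
proof -
  have "(\<Sum>\<alpha>\<in>{\<alpha>. mdeg \<alpha> \<le> Suc N}. of_nat (\<alpha> i) * F \<alpha> (\<alpha>(i := \<alpha> i - 1))) =
      (\<Sum>\<alpha>\<in>{\<alpha>. mdeg \<alpha> \<le> Suc N \<and> 1 \<le> \<alpha> i}. of_nat (\<alpha> i) * F \<alpha> (\<alpha>(i := \<alpha> i - 1)))"
    by (rule sum.mono_neutral_right) (auto simp: finite_mdeg_le Suc_le_eq intro!: gr0I)
  also have "\<dots> = (\<Sum>\<alpha>\<in>{\<alpha>. mdeg \<alpha> \<le> N}. of_nat (\<alpha> i + 1) * F (\<alpha>(i := \<alpha> i + 1)) \<alpha>)"
  proof (rule sum.reindex_bij_witness[where i="\<lambda>\<alpha>. \<alpha>(i := \<alpha> i + 1)" and j="\<lambda>\<alpha>. \<alpha>(i := \<alpha> i - 1)"])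
    fix \<alpha> :: "'n \<Rightarrow> nat" assume "\<alpha> \<in> {\<alpha>. mdeg \<alpha> \<le> N}"
    then show "\<alpha>(i := \<alpha> i + 1) \<in> {\<alpha>. mdeg \<alpha> \<le> Suc N \<and> 1 \<le> \<alpha> i}"
      using mdeg_fun_upd[of \<alpha> i "\<alpha> i + 1"] by simp
  next
    fix \<alpha> :: "'n \<Rightarrow> nat" assume "\<alpha> \<in> {\<alpha>. mdeg \<alpha> \<le> Suc N \<and> 1 \<le> \<alpha> i}"
    then show "\<alpha>(i := \<alpha> i - 1) \<in> {\<alpha>. mdeg \<alpha> \<le> N}"
      using mdeg_fun_upd[of \<alpha> i "\<alpha> i - 1"] by simp linarith
  qed auto
  finally show ?thesis .
qed

lemma const_v_du: "const_v (du \<psi> i \<alpha>) = of_nat (\<alpha> i + 1) * const_v (\<psi> (\<alpha>(i := \<alpha> i + 1)))"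
proof -
  have "du \<psi> i \<alpha> = (\<lambda>\<beta>. of_nat (\<alpha> i + 1) * \<psi> (\<alpha>(i := \<alpha> i + 1)) \<beta>)"
    by (simp add: fun_eq_iff du_def)
  then show ?thesis by (simp only: const_v_of_nat_mult)
qed

lemma mfps_deriv_comp_trunc:
  "mfps_deriv j (comp_trunc \<psi> A (Suc N)) = (\<Sum>i\<in>UNIV. comp_trunc (du \<psi> i) A N * mfps_deriv j (A i))"
proof -
  have "mfps_deriv j (comp_trunc \<psi> A (Suc N)) =
      (\<Sum>i\<in>UNIV. (\<Sum>\<alpha>\<in>{\<alpha>. mdeg \<alpha> \<le> Suc N}. of_nat (\<alpha> i) * (const_v (\<psi> \<alpha>) * mpow A (\<alpha>(i := \<alpha> i - 1))))
        * mfps_deriv j (A i))"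
    by (simp add: comp_trunc_def mfps_deriv_sum mfps_deriv_mult mfps_deriv_mpow sum_distrib_left
        sum_distrib_right mult_ac sum.swap[of _ "{\<alpha>. mdeg \<alpha> \<le> Suc N}"])
  also have "\<dots> = (\<Sum>i\<in>UNIV. comp_trunc (du \<psi> i) A N * mfps_deriv j (A i))"
  proof (rule sum.cong[OF refl])
    fix i
    show "(\<Sum>\<alpha>\<in>{\<alpha>. mdeg \<alpha> \<le> Suc N}. of_nat (\<alpha> i) * (const_v (\<psi> \<alpha>) * mpow A (\<alpha>(i := \<alpha> i - 1))))
        * mfps_deriv j (A i) = comp_trunc (du \<psi> i) A N * mfps_deriv j (A i)"
      using sum_mdeg_le_Suc_shift[of i "\<lambda>\<alpha> \<beta>. const_v (\<psi> \<alpha>) * mpow A \<beta>" N]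
      by (simp add: comp_trunc_def const_v_du mult_ac)
  qed
  finally show ?thesis .
qed

section \<open>Coefficients of products, subst and jac_det\<close>

lemma sum_fun_apply: "(\<Sum>i\<in>S. (f i :: 'a \<Rightarrow> nat)) k = (\<Sum>i\<in>S. f i k)"
  by (induction S rule: infinite_finite_induct) auto

lemma exps_member_le_sum: "finite S \<Longrightarrow> i \<in> S \<Longrightarrow> (f i :: 'n exps) \<le> (\<Sum>j\<in>S. f j)"
  unfolding less_eq_prod_def le_fun_def
  by (auto simp: fst_sum snd_sum sum_fun_apply intro!: member_le_sum)

definition decomps :: "'i set \<Rightarrow> 'n::finite exps \<Rightarrow> ('i \<Rightarrow> 'n exps) set" where
  "decomps S e = {m \<in> PiE S (\<lambda>_. {x. x \<le> e}). (\<Sum>i\<in>S. m i) = e}"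

lemma finite_decomps: "finite S \<Longrightarrow> finite (decomps S e)"
  unfolding decomps_def
  by (rule finite_subset[of _ "PiE S (\<lambda>_. {x. x \<le> e})"]) (auto intro!: finite_PiE finite_exps_le)

lemma bij_betw_decomps_insert:
  assumes S: "finite S" and x: "x \<notin> S"
  shows "bij_betw (\<lambda>(y, g). g(x := y)) (SIGMA y:{y. y \<le> e}. decomps S (e - y)) (decomps (insert x S) e)"
proof (rule bij_betw_byWitness[where f'="\<lambda>m. (m x, restrict m S)"])
  show "\<forall>p\<in>(SIGMA y:{y. y \<le> e}. decomps S (e - y)). (\<lambda>m. (m x, restrict m S)) ((\<lambda>(y, g). g(x := y)) p) = p"
    using x by (auto simp: decomps_def restrict_def PiE_def extensional_def fun_eq_iff)
  show "\<forall>m\<in>decomps (insert x S) e. (\<lambda>(y, g). g(x := y)) (m x, restrict m S) = m"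
    by (auto simp: decomps_def restrict_def PiE_def extensional_def fun_eq_iff)
  show "(\<lambda>(y, g). g(x := y)) ` (SIGMA y:{y. y \<le> e}. decomps S (e - y)) \<subseteq> decomps (insert x S) e"
  proof clarify
    fix y g assume y: "y \<le> e" and g: "g \<in> decomps S (e - y)"
    have "(\<Sum>i\<in>S. (g(x := y)) i) = (\<Sum>i\<in>S. g i)" using x by (intro sum.cong) auto
    then have "(\<Sum>i\<in>insert x S. (g(x := y)) i) = e"
      using S x g y by (simp add: decomps_def exps_add_diff)
    moreover have "g(x := y) \<in> PiE (insert x S) (\<lambda>_. {z. z \<le> e})"
      using g y x by (auto simp: decomps_def PiE_def extensional_def Pi_def intro: order_trans[OF _ exps_diff_le])
    ultimately show "g(x := y) \<in> decomps (insert x S) e" by (simp add: decomps_def)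
  qed
  show "(\<lambda>m. (m x, restrict m S)) ` decomps (insert x S) e \<subseteq> (SIGMA y:{y. y \<le> e}. decomps S (e - y))"
  proof (rule image_subsetI)
    fix m assume m: "m \<in> decomps (insert x S) e"
    then have "m x + (\<Sum>i\<in>S. m i) = e" using S x by (simp add: decomps_def)
    then have sum: "(\<Sum>i\<in>S. restrict m S i) = e - m x"
      by (metis (no_types, lifting) exps_add_diff_cancel_left restrict_apply' sum.cong)
    then have "restrict m S \<in> PiE S (\<lambda>_. {z. z \<le> e - m x})"
      using exps_member_le_sum[OF S, of _ "restrict m S"] by auto
    then show "(m x, restrict m S) \<in> (SIGMA y:{y. y \<le> e}. decomps S (e - y))"
      using m sum by (auto simp: decomps_def)
  qed
qed

lemma coef_prod:
  "finite S \<Longrightarrow> coef (\<Prod>i\<in>S. F i) e = (\<Sum>m\<in>decomps S e. \<Prod>i\<in>S. coef (F i) (m i))"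
proof (induction S arbitrary: e rule: finite_induct)
  case empty
  then show ?case by (simp add: decomps_def coef_1)
next
  case (insert x S)
  have "(\<Sum>m\<in>decomps (insert x S) e. \<Prod>i\<in>insert x S. coef (F i) (m i)) =
      (\<Sum>(y, g)\<in>(SIGMA y:{y. y \<le> e}. decomps S (e - y)). \<Prod>i\<in>insert x S. coef (F i) ((g(x := y)) i))"
    using sum.reindex_bij_betw[OF bij_betw_decomps_insert[OF insert.hyps, of e],
        where g="\<lambda>m. \<Prod>i\<in>insert x S. coef (F i) (m i)"]
    by (simp add: case_prod_unfold)
  also have "\<dots> = (\<Sum>y\<in>{y. y \<le> e}. coef (F x) y * (\<Sum>g\<in>decomps S (e - y). \<Prod>i\<in>S. coef (F i) (g i)))"
  proof -
    have "(\<Prod>i\<in>S. coef (F i) ((g(x := y)) i)) = (\<Prod>i\<in>S. coef (F i) (g i))" for g y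
      using insert.hyps by (intro prod.cong) auto
    then show ?thesis
      using insert.hyps
      by (simp add: sum.Sigma[symmetric] finite_exps_le finite_decomps sum_distrib_left)
  qed
  also have "\<dots> = coef (\<Prod>i\<in>insert x S. F i) e"
    using insert by (simp add: coef_mult)
  finally show ?case ..
qed

definition of_fps2 :: "'n fps2 \<Rightarrow> 'n::finite mfps" where
  "of_fps2 F = Abs_mfps (\<lambda>(a, b). F a b)"

lemma coef_of_fps2 [simp]: "coef (of_fps2 F) x = F (fst x) (snd x)"
  by (simp add: of_fps2_def case_prod_unfold)

lemma u_order_of_fps2 [simp]: "u_order (of_fps2 F) = ord_u F"
  by (simp add: u_order_def)

lemma prodcoeff_eq_coef_prod:
  assumes "finite S"
  shows "prodcoeff S F \<gamma> \<epsilon> = coef (\<Prod>i\<in>S. of_fps2 (F i)) (\<gamma>, \<epsilon>)"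
proof -
  have "{a. a \<le> \<gamma>} \<times> {b. b \<le> \<epsilon>} = {x. x \<le> (\<gamma>, \<epsilon>)}"
    by (auto simp: less_eq_prod_def)
  moreover have "((\<lambda>k. \<Sum>i\<in>S. fst (m i) k) = \<gamma> \<and> (\<lambda>k. \<Sum>i\<in>S. snd (m i) k) = \<epsilon>) \<longleftrightarrow>
      (\<Sum>i\<in>S. m i) = (\<gamma>, \<epsilon>)" for m :: "_ \<Rightarrow> _ exps"
    by (simp add: prod_eq_iff fst_sum snd_sum sum_fun_apply fun_eq_iff)
  ultimately show ?thesis
    using assms by (simp add: prodcoeff_def coef_prod decomps_def case_prod_unfold)
qed

lemma prodcoeff_eq_coef_mpow:
  "prodcoeff {(i, j). j < \<alpha> i} (\<lambda>(i, j). A i) \<gamma> \<epsilon> = coef (mpow (\<lambda>i. of_fps2 (A i)) \<alpha>) (\<gamma>, \<epsilon>)"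
proof -
  have S: "{(i, j). j < \<alpha> i} = Sigma UNIV (\<lambda>i. {..<\<alpha> i})" by auto
  have "(\<Prod>p\<in>{(i, j). j < \<alpha> i}. of_fps2 ((\<lambda>(i, j). A i) p)) = (\<Prod>i\<in>UNIV. \<Prod>j\<in>{..<\<alpha> i}. of_fps2 (A i))"
    unfolding S by (subst prod.Sigma) (auto simp: case_prod_unfold)
  also have "\<dots> = mpow (\<lambda>i. of_fps2 (A i)) \<alpha>" by (simp add: mpow_def)
  moreover have "finite {(i, j). j < \<alpha> i}" unfolding S by auto
  ultimately show ?thesis by (simp add: prodcoeff_eq_coef_prod)
qed

lemma coef_comp_trunc:
  fixes A :: "'n::finite \<Rightarrow> 'n fps2"
  assumes A: "\<And>i. 1 \<le> ord_u (A i)" and N: "mdeg \<gamma> \<le> N"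
  shows "coef (comp_trunc \<psi> (\<lambda>i. of_fps2 (A i)) N) (\<gamma>, \<epsilon>) = subst \<psi> A \<gamma> \<epsilon>"
proof -
  let ?A = "\<lambda>i. of_fps2 (A i)"
  have "{(\<alpha>, \<beta>). mdeg \<alpha> \<le> mdeg \<gamma> \<and> \<beta> \<le> \<epsilon>} = {\<alpha>. mdeg \<alpha> \<le> mdeg \<gamma>} \<times> {\<beta>. \<beta> \<le> \<epsilon>}"
    by auto
  then have "subst \<psi> A \<gamma> \<epsilon> =
      (\<Sum>\<alpha>\<in>{\<alpha>. mdeg \<alpha> \<le> mdeg \<gamma>}. \<Sum>\<beta>\<in>{\<beta>. \<beta> \<le> \<epsilon>}. \<psi> \<alpha> \<beta> * coef (mpow ?A \<alpha>) (\<gamma>, \<epsilon> - \<beta>))"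
    unfolding subst_def
    by (simp add: sum.cartesian_product prodcoeff_eq_coef_mpow fun_diff_def)
  also have "\<dots> = (\<Sum>\<alpha>\<in>{\<alpha>. mdeg \<alpha> \<le> mdeg \<gamma>}. coef (const_v (\<psi> \<alpha>) * mpow ?A \<alpha>) (\<gamma>, \<epsilon>))"
    by (simp add: coef_const_v_mult)
  also have "\<dots> = (\<Sum>\<alpha>\<in>{\<alpha>. mdeg \<alpha> \<le> N}. coef (const_v (\<psi> \<alpha>) * mpow ?A \<alpha>) (\<gamma>, \<epsilon>))"
  proof (rule sum.mono_neutral_left)
    show "\<forall>\<alpha>\<in>{\<alpha>. mdeg \<alpha> \<le> N} - {\<alpha>. mdeg \<alpha> \<le> mdeg \<gamma>}. coef (const_v (\<psi> \<alpha>) * mpow ?A \<alpha>) (\<gamma>, \<epsilon>) = 0"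
    proof
      fix \<alpha> :: "'n \<Rightarrow> nat" assume "\<alpha> \<in> {\<alpha>. mdeg \<alpha> \<le> N} - {\<alpha>. mdeg \<alpha> \<le> mdeg \<gamma>}"
      then have "mdeg \<gamma> < mdeg \<alpha>" by simp
      moreover have "enat (mdeg \<alpha>) \<le> u_order (const_v (\<psi> \<alpha>) * mpow ?A \<alpha>)"
        using u_order_mpow_ge[of ?A \<alpha>] A by (simp add: u_order_mult add_increasing)
      ultimately show "coef (const_v (\<psi> \<alpha>) * mpow ?A \<alpha>) (\<gamma>, \<epsilon>) = 0"
        by (simp add: enat_le_u_order_iff)
    qed
  qed (use N in \<open>auto simp: finite_mdeg_le\<close>)
  also have "\<dots> = coef (comp_trunc \<psi> ?A N) (\<gamma>, \<epsilon>)"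
    by (simp add: comp_trunc_def coef_sum)
  finally show ?thesis by simp
qed

lemma enat_le_ord_u_subst_iff:
  fixes A :: "'n::finite \<Rightarrow> 'n fps2"
  assumes "\<And>i. 1 \<le> ord_u (A i)" and "m \<le> Suc N"
  shows "enat m \<le> ord_u (subst \<psi> A) \<longleftrightarrow> enat m \<le> u_order (comp_trunc \<psi> (\<lambda>i. of_fps2 (A i)) N)"
  using assms coef_comp_trunc[OF assms(1)]
  by (auto simp: enat_le_u_order_iff enat_le_ord_u_iff)

lemma subst_at_0:
  fixes A :: "'n::finite \<Rightarrow> 'n fps2"
  assumes "\<And>i. 1 \<le> ord_u (A i)"
  shows "subst \<psi> A 0 \<epsilon> = \<psi> 0 \<epsilon>"
proof -
  have "{\<alpha>::'n \<Rightarrow> nat. mdeg \<alpha> \<le> 0} = {0}" by (auto simp: mdeg_eq_0_iff)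
  then have "comp_trunc \<psi> (\<lambda>i. of_fps2 (A i)) 0 = const_v (\<psi> 0)"
    by (simp add: comp_trunc_def)
  then show ?thesis
    using coef_comp_trunc[where A=A and \<gamma>=0 and N=0 and \<psi>=\<psi> and \<epsilon>=\<epsilon>, OF assms]
    by (simp add: coef_const_v mdeg_def)
qed

definition jacobian :: "('n \<Rightarrow> 'n::finite mfps) \<Rightarrow> 'n mfps^'n^'n" where
  "jacobian A = (\<chi> i j. mfps_deriv j (A i))"

lemma mfps_deriv_of_fps2: "mfps_deriv j (of_fps2 F) = of_fps2 (du F j)"
proof (rule mfps_eqI)
  fix x :: "'a exps"
  have "x + unit_u j = ((fst x)(j := fst x j + 1), snd x)"
    by (auto simp: unit_u_def fun_eq_iff prod_eq_iff)
  then show "coef (mfps_deriv j (of_fps2 F)) x = coef (of_fps2 (du F j)) x"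
    by (simp add: coef_mfps_deriv du_def)
qed

lemma u_order_det_jacobian: "u_order (det (jacobian (\<lambda>i. of_fps2 (A i)))) = ord_u (jac_det A)"
proof -
  have "coef (det (jacobian (\<lambda>i. of_fps2 (A i)))) (a, b) = jac_det A a b" for a b
    unfolding det_def jac_det_def jacobian_def
    by (simp add: coef_sum coef_of_int_mult prodcoeff_eq_coef_prod mfps_deriv_of_fps2)
  then show ?thesis by (simp add: u_order_def)
qed

section \<open>The induction\<close>

lemma det_replace_row_lincomb:
  fixes J :: "'a::comm_ring_1^'n::finite^'n" and w :: "'a^'n"
  shows "det (\<chi> i. if i = k then (\<Sum>l\<in>UNIV. w$l *s row l J) else row i J) = w$k * det J"
proof -
  have "det (\<chi> i. if i = k then (\<Sum>l\<in>UNIV. w$l *s row l J) else row i J) =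
      (\<Sum>l\<in>UNIV. w$l * det (\<chi> i. if i = k then row l J else row i J))"
    by (simp add: det_linear_row_sum det_row_mul[of k "w$_" "\<lambda>i. row _ J" "\<lambda>i. row i J"])
  also have "\<dots> = w$k * det J"
  proof (subst sum.remove[of _ k])
    have "det (\<chi> i. if i = k then row l J else row i J) = 0" if "l \<noteq> k" for l
      using that by (intro det_identical_rows[of k l]) (auto simp: row_def vec_eq_iff)
    moreover have "(\<chi> i. if i = k then row k J else row i J) = J"
      by (simp add: vec_eq_iff row_def)
    ultimately show "w$k * det (\<chi> i. if i = k then row k J else row i J) +
        (\<Sum>l\<in>UNIV - {k}. w$l * det (\<chi> i. if i = k then row l J else row i J)) = w$k * det J"
      by simp
  qed auto
  finally show ?thesis .
qed

lemma u_order_det_ge: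
  fixes X :: "'n::finite mfps^'m::finite^'m"
  assumes "\<And>j. enat m \<le> u_order (X $ k $ j)"
  shows "enat m \<le> u_order (det X)"
  unfolding det_def
proof (rule u_order_sum_ge)
  fix p
  have "(\<Prod>i\<in>UNIV. X $ i $ p i) = X $ k $ p k * (\<Prod>i\<in>UNIV - {k}. X $ i $ p i)"
    by (rule prod.remove) auto
  then show "enat m \<le> u_order (of_int (sign p) * (\<Prod>i\<in>UNIV. X $ i $ p i))"
    using assms[of "p k"] by (simp add: u_order_mult add_increasing add_increasing2)
qed

text \<open>By the chain rule the row of u-derivatives of psi(A) is the combination of the rows of A_u
  with coefficients (d psi / dt_i)(A), so Cramer's rule applies.\<close>

lemma u_order_comp_trunc_du_ge:
  fixes A :: "'n::finite \<Rightarrow> 'n mfps" and \<psi> :: "'n fps2"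
  assumes det: "u_order (det (jacobian A)) \<le> enat \<nu>"
    and \<psi>: "enat (Suc M) \<le> u_order (comp_trunc \<psi> A (Suc M))"
  shows "enat (M - \<nu>) \<le> u_order (comp_trunc (du \<psi> k) A M)"
proof -
  define W where "W = (\<chi> i. comp_trunc (du \<psi> i) A M)"
  define D where "D = (\<chi> j. mfps_deriv j (comp_trunc \<psi> A (Suc M)))"
  have D_eq: "D = (\<Sum>l\<in>UNIV. W$l *s row l (jacobian A))"
    by (simp add: D_def W_def vec_eq_iff row_def jacobian_def mfps_deriv_comp_trunc)
  have "det (\<chi> i. if i = k then D else row i (jacobian A)) = W$k * det (jacobian A)"
    unfolding D_eq by (rule det_replace_row_lincomb)
  moreover have "enat M \<le> u_order (det (\<chi> i. if i = k then D else row i (jacobian A)))"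
    by (rule u_order_det_ge[where k=k]) (simp add: D_def u_order_mfps_deriv_ge[OF \<psi>])
  ultimately have "enat M \<le> u_order (W$k) + enat \<nu>"
    using det by (metis u_order_mult add_left_mono order_trans)
  then show ?thesis by (cases "u_order (W$k)") (simp_all add: W_def)
qed

lemma one_le_ord_u_iff: "1 \<le> ord_u f \<longleftrightarrow> (\<forall>\<beta>. f 0 \<beta> = 0)"
  unfolding one_enat_def enat_le_ord_u_iff by (auto simp: mdeg_eq_0_iff)

lemma ord_u_subst_du_gt:
  fixes A :: "'n::finite \<Rightarrow> 'n fps2"
  assumes A: "\<And>i. 1 \<le> ord_u (A i)" and det: "ord_u (jac_det A) \<le> enat \<nu>"
    and \<psi>: "enat (Suc r * (\<nu> + 1)) < ord_u (subst \<psi> A)"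
  shows "enat (r * (\<nu> + 1)) < ord_u (subst (du \<psi> k) A)"
proof -
  let ?A = "\<lambda>i. of_fps2 (A i)"
  define M where "M = Suc r * (\<nu> + 1)"
  have "enat (Suc M) \<le> u_order (comp_trunc \<psi> ?A (Suc M))"
    using \<psi> enat_le_ord_u_subst_iff[OF A, of "Suc M" "Suc M"] by (simp add: M_def Suc_ile_eq)
  then have "enat (M - \<nu>) \<le> u_order (comp_trunc (du \<psi> k) ?A M)"
    using det by (intro u_order_comp_trunc_du_ge) (simp add: u_order_det_jacobian)
  moreover have "M - \<nu> = Suc (r * (\<nu> + 1))" by (simp add: M_def)
  ultimately have "enat (Suc (r * (\<nu> + 1))) \<le> ord_u (subst (du \<psi> k) A)"
    using enat_le_ord_u_subst_iff[OF A, of "Suc (r * (\<nu> + 1))" M] by (simp add: M_def)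
  then show ?thesis by (simp add: Suc_ile_eq)
qed

lemma ord_u_gt_Suc_if_du:
  assumes \<psi>0: "1 \<le> ord_u \<psi>" and du: "\<And>k. enat r < ord_u (du \<psi> k)"
  shows "enat (Suc r) < ord_u \<psi>"
proof -
  have "\<psi> \<alpha> \<beta> = 0" if deg: "mdeg \<alpha> < Suc (Suc r)" for \<alpha> \<beta>
  proof (cases "\<alpha> = 0")
    case False
    then obtain k where k: "\<alpha> k \<noteq> 0" by (auto simp: fun_eq_iff)
    define \<alpha>' where "\<alpha>' = \<alpha>(k := \<alpha> k - 1)"
    have "mdeg \<alpha>' + \<alpha> k = mdeg \<alpha> + (\<alpha> k - 1)"
      unfolding \<alpha>'_def by (rule mdeg_fun_upd)
    then have "mdeg \<alpha>' < Suc r" using deg k by linarith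
    then have "du \<psi> k \<alpha>' \<beta> = 0"
      using du[of k] by (simp add: Suc_ile_eq[symmetric] enat_le_ord_u_iff)
    moreover have "\<alpha>'(k := \<alpha>' k + 1) = \<alpha>" using k by (auto simp: \<alpha>'_def)
    moreover have "(of_nat (\<alpha>' k + 1) :: complex) \<noteq> 0" by (simp only: of_nat_eq_0_iff)
    ultimately show ?thesis by (simp add: du_def)
  qed (use \<psi>0 in \<open>simp add: one_le_ord_u_iff\<close>)
  then show ?thesis by (simp add: Suc_ile_eq[symmetric] enat_le_ord_u_iff)
qed

theorem lemma4p13:
  fixes A :: "'n::finite \<Rightarrow> 'n fps2" and \<psi> :: "'n fps2" and \<nu> r :: nat
  assumes "jac_det A \<noteq> (\<lambda>_ _. 0)"
    and "\<forall>i \<beta>. A i (\<lambda>_. 0) \<beta> = 0"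
    and "ord_u (jac_det A) \<le> enat \<nu>"
    and "ord_u (subst \<psi> A) > enat (r * (\<nu> + 1))"
  shows "ord_u \<psi> > enat r"
proof -
  have A: "1 \<le> ord_u (A i)" for i
    using assms(2) by (simp add: one_le_ord_u_iff zero_fun_def)
  have \<psi>0: "1 \<le> ord_u \<psi>" if "1 \<le> ord_u (subst \<psi> A)" for \<psi>
    using that subst_at_0[OF A] by (simp add: one_le_ord_u_iff)
  have "enat r < ord_u \<psi>" if "enat (r * (\<nu> + 1)) < ord_u (subst \<psi> A)" for r \<psi>
    using that
  proof (induction r arbitrary: \<psi>)
    case 0
    then show ?case using \<psi>0 by (simp add: Suc_ile_eq[symmetric] one_enat_def)
  next
    case (Suc r)
    have "enat r < ord_u (du \<psi> k)" for k
      using ord_u_subst_du_gt[OF A assms(3) Suc.prems] by (rule Suc.IH)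
    moreover have "1 \<le> ord_u \<psi>"
    proof (rule \<psi>0)
      have "enat 1 \<le> enat (Suc (Suc r * (\<nu> + 1)))" by simp
      also have "\<dots> \<le> ord_u (subst \<psi> A)" using Suc.prems by (simp only: Suc_ile_eq)
      finally show "1 \<le> ord_u (subst \<psi> A)" by (simp add: one_enat_def)
    qed
    ultimately show ?case by (intro ord_u_gt_Suc_if_du)
  qed
  then show ?thesis using assms(4) .
qed

end
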